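(* Let $f:[-1,1]\to\mathbb{R}$, $\epsilon_0>0$, and let $P_k:[-1,1]\to\mathbb{C}$ be a degree-$k$ polynomial with $\max_{x\in[-1,1]}|f(x)-P_k(x)|\le\epsilon_0$. Let $\gamma:=\max_{x\in[-1,1]}|f(x)|$. Let $\ket{\psi}=\sum_{j=1}^N\psi_j\ket{j}$ with $\psi_j\in\mathbb{R}$ and $\|\ket{\psi}\|_2=1$, and let $\mathcal{N}^2:=\sum_j|f(\psi_j)|^2>0$, $\mathcal{N}_1^2:=\sum_j|P_k(\psi_j)|^2$. Let $\epsilon\in(0,1]$ and $$\Delta_k:=\Big\|\frac{1}{\mathcal{N}}\sum_j f(\psi_j)\ket{j}-\frac{1}{\mathcal{N}_1}\sum_jP_k(\psi_j)\ket{j}\Big\|_2.$$ If $\epsilon_0\le\epsilon\mathcal{N}^2/(8\gamma N)$, then $\Delta_k\le\epsilon$. *)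

theory Defs
  imports Complex_Main "HOL-Computational_Algebra.Polynomial"
begin

end

theory Submission
  imports Defs "HOL-Analysis.L2_Norm" "HOL-Analysis.Elementary_Metric_Spaces"
begin

text \<open>
  Let \<open>a\<close> and \<open>b\<close> be the vectors with entries \<open>f(\<psi>\<^sub>j)\<close> and \<open>P(\<psi>\<^sub>j)\<close>, so \<open>Nf = \<parallel>a\<parallel>\<close> and
  \<open>N1 = \<parallel>b\<parallel>\<close>. Writing \<open>a/\<parallel>a\<parallel> - b/\<parallel>b\<parallel> = (a - b)/\<parallel>a\<parallel> + (1/\<parallel>a\<parallel> - 1/\<parallel>b\<parallel>) b\<close> and using
  \<open>|\<parallel>a\<parallel> - \<parallel>b\<parallel>| \<le> \<parallel>a - b\<parallel>\<close> gives \<open>\<Delta>\<^sub>k \<le> 2\<parallel>a - b\<parallel>/\<parallel>a\<parallel>\<close>. Since \<open>|\<psi>\<^sub>j| \<le> 1\<close>, every entry of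
  \<open>a - b\<close> has modulus at most \<open>\<epsilon>\<^sub>0\<close> and every entry of \<open>a\<close> at most \<open>\<gamma>\<close>, so
  \<open>\<parallel>a - b\<parallel> \<le> \<surd>N \<epsilon>\<^sub>0\<close> and \<open>\<parallel>a\<parallel> \<le> \<surd>N \<gamma>\<close>; the hypothesis on \<open>\<epsilon>\<^sub>0\<close> then even gives
  \<open>\<Delta>\<^sub>k \<le> \<epsilon>/4\<close>.
\<close>

lemma L2_set_norm_triangle_ineq:
  fixes x y :: "'a \<Rightarrow> 'b::real_normed_vector"
  shows "L2_set (\<lambda>i. norm (x i + y i)) A \<le> L2_set (\<lambda>i. norm (x i)) A + L2_set (\<lambda>i. norm (y i)) A"
proof -
  have "L2_set (\<lambda>i. norm (x i + y i)) A \<le> L2_set (\<lambda>i. norm (x i) + norm (y i)) A"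
    by (rule L2_set_mono) (auto simp: norm_triangle_ineq)
  also have "\<dots> \<le> L2_set (\<lambda>i. norm (x i)) A + L2_set (\<lambda>i. norm (y i)) A"
    by (rule L2_set_triangle_ineq)
  finally show ?thesis .
qed

lemma L2_set_norm_triangle_ineq3:
  fixes x y :: "'a \<Rightarrow> 'b::real_normed_vector"
  shows "\<bar>L2_set (\<lambda>i. norm (x i)) A - L2_set (\<lambda>i. norm (y i)) A\<bar> \<le> L2_set (\<lambda>i. norm (x i - y i)) A"
proof -
  have "L2_set (\<lambda>i. norm (x i)) A \<le> L2_set (\<lambda>i. norm (x i - y i)) A + L2_set (\<lambda>i. norm (y i)) A"
    using L2_set_norm_triangle_ineq[of "\<lambda>i. x i - y i" y A] by simp
  moreover have "L2_set (\<lambda>i. norm (y i)) A \<le> L2_set (\<lambda>i. norm (x i - y i)) A + L2_set (\<lambda>i. norm (x i)) A"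
    using L2_set_norm_triangle_ineq[of "\<lambda>i. x i - y i" "\<lambda>i. - x i" A]
    by (simp add: norm_minus_commute)
  ultimately show ?thesis by linarith
qed

lemma L2_set_norm_scaleR:
  "L2_set (\<lambda>i. norm (c *\<^sub>R x i)) A = \<bar>c\<bar> * L2_set (\<lambda>i. norm (x i)) A"
  by (simp add: L2_set_right_distrib)

lemma L2_set_normalized_diff_le:
  fixes x y :: "'a \<Rightarrow> 'b::real_normed_vector" and A :: "'a set"
  defines "nx \<equiv> L2_set (\<lambda>i. norm (x i)) A" and "ny \<equiv> L2_set (\<lambda>i. norm (y i)) A"
  assumes "0 < nx"
  shows "L2_set (\<lambda>i. norm (x i /\<^sub>R nx - y i /\<^sub>R ny)) A \<le> 2 * L2_set (\<lambda>i. norm (x i - y i)) A / nx"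
proof -
  define d where "d = L2_set (\<lambda>i. norm (x i - y i)) A"
  have decomposition: "x i /\<^sub>R nx - y i /\<^sub>R ny = (x i - y i) /\<^sub>R nx + (inverse nx - inverse ny) *\<^sub>R y i" for i
    by (simp add: algebra_simps)
  have rescale: "\<bar>inverse nx - inverse ny\<bar> * ny \<le> d / nx"
  proof (cases "ny = 0")
    case False
    then have "\<bar>inverse nx - inverse ny\<bar> * ny = \<bar>ny - nx\<bar> / nx"
      using \<open>0 < nx\<close> by (simp add: ny_def field_simps abs_divide)
    also have "\<dots> \<le> d / nx"
      using L2_set_norm_triangle_ineq3[of y A x] \<open>0 < nx\<close>
      by (simp add: divide_right_mono nx_def ny_def d_def norm_minus_commute)
    finally show ?thesis .
  qed (use \<open>0 < nx\<close> in \<open>simp add: d_def\<close>)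
    \<comment> \<open>for \<open>ny = 0\<close> the junk value \<open>inverse 0 = 0\<close> drops \<open>y\<close> altogether\<close>
  have "L2_set (\<lambda>i. norm (x i /\<^sub>R nx - y i /\<^sub>R ny)) A \<le> d / nx + \<bar>inverse nx - inverse ny\<bar> * ny"
    unfolding decomposition
    using L2_set_norm_triangle_ineq[of "\<lambda>i. (x i - y i) /\<^sub>R nx" "\<lambda>i. (inverse nx - inverse ny) *\<^sub>R y i" A]
      \<open>0 < nx\<close>
    by (simp only: L2_set_norm_scaleR) (simp add: d_def ny_def divide_inverse mult.commute)
  with rescale show ?thesis by (simp add: d_def)
qed

lemma L2_set_le_sqrt_card_mult:
  assumes "\<And>i. i \<in> A \<Longrightarrow> 0 \<le> g i" and "\<And>i. i \<in> A \<Longrightarrow> g i \<le> c"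
  shows "L2_set g A \<le> sqrt (card A) * c"
proof (cases "A = {}")
  case False
  then have "0 \<le> c" using assms by fastforce
  have "L2_set g A \<le> L2_set (\<lambda>i. c) A"
    by (rule L2_set_mono) (use assms in auto)
  with \<open>0 \<le> c\<close> show ?thesis by (simp add: L2_set_constant)
qed simp

lemma abs_le_one_if_sum_squares_le_one:
  fixes \<psi> :: "'a \<Rightarrow> real"
  assumes "finite A" and "j \<in> A" and "(\<Sum>i\<in>A. (\<psi> i)\<^sup>2) \<le> 1"
  shows "\<bar>\<psi> j\<bar> \<le> 1"
proof -
  have "(\<psi> j)\<^sup>2 \<le> (\<Sum>i\<in>A. (\<psi> i)\<^sup>2)"
    using assms by (intro member_le_sum) auto
  with assms(3) have "(\<psi> j)\<^sup>2 \<le> 1" by linarith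
  then show ?thesis by (simp add: abs_square_le_1)
qed

lemma bdd_above_norm_if_close_to_continuous:
  fixes f g :: "'a::topological_space \<Rightarrow> 'b::real_normed_vector"
  assumes "compact S" and "continuous_on S g" and "\<And>x. x \<in> S \<Longrightarrow> norm (f x - g x) \<le> e"
  shows "bdd_above ((\<lambda>x. norm (f x)) ` S)"
proof -
  obtain B where B: "\<And>x. x \<in> S \<Longrightarrow> norm (g x) \<le> B"
    using continuous_on_compact_bound[OF assms(1,2)] by blast
  have "norm (f x) \<le> B + e" if "x \<in> S" for x
    using norm_triangle_ineq[of "f x - g x" "g x"] assms(3)[OF that] B[OF that] by simp
  then show ?thesis by (intro bdd_aboveI2) auto
qed

lemma two_sqrt_mult_div_le:
  fixes n \<gamma> \<nu> \<epsilon>0 \<epsilon> :: real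
  assumes "0 < n" and "0 < \<nu>" and "\<nu> \<le> sqrt n * \<gamma>" and "0 \<le> \<epsilon>0" and "0 \<le> \<epsilon>"
    and "\<epsilon>0 \<le> \<epsilon> * \<nu>\<^sup>2 / (8 * \<gamma> * n)"
  shows "2 * (sqrt n * \<epsilon>0) / \<nu> \<le> \<epsilon>"
proof -
  have "0 < sqrt n * \<gamma>" using assms(2,3) by linarith
  then have "0 < \<gamma>" using assms(1) by (simp add: zero_less_mult_iff)
  have "(8 * sqrt n * \<epsilon>0) * (sqrt n * \<gamma>) = 8 * \<gamma> * (sqrt n)\<^sup>2 * \<epsilon>0"
    by (simp add: power2_eq_square algebra_simps)
  also have "\<dots> = 8 * \<gamma> * n * \<epsilon>0" using assms(1) by simp
  also have "\<dots> \<le> \<epsilon> * \<nu>\<^sup>2"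
    using assms(1,6) \<open>0 < \<gamma>\<close> by (simp add: le_divide_eq mult.commute)
  also have "\<dots> \<le> \<epsilon> * \<nu> * (sqrt n * \<gamma>)"
    using mult_left_mono[OF assms(3), of "\<epsilon> * \<nu>"] assms by (simp add: power2_eq_square mult.assoc)
  finally have "(8 * sqrt n * \<epsilon>0) * (sqrt n * \<gamma>) \<le> (\<epsilon> * \<nu>) * (sqrt n * \<gamma>)"
    by (simp add: mult.assoc)
  then have "8 * (sqrt n * \<epsilon>0) \<le> \<epsilon> * \<nu>"
    using \<open>0 < \<gamma>\<close> assms(1) by (simp add: mult_ac)
  moreover have "0 \<le> sqrt n * \<epsilon>0" using assms by simp
  ultimately have "2 * (sqrt n * \<epsilon>0) \<le> \<epsilon> * \<nu>" by linarith
  then show ?thesis using assms(2) by (simp add: divide_le_eq)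
qed

theorem lemma13:
  fixes f :: "real \<Rightarrow> real" and P :: "complex poly" and k :: nat
    and \<epsilon>0 \<epsilon> \<gamma> Nf N1 :: real and N :: nat and \<psi> :: "nat \<Rightarrow> real"
  assumes "\<epsilon>0 > 0"
    and "degree P = k"
    and approx: "\<forall>x\<in>{-1..1}. cmod (complex_of_real (f x) - poly P (complex_of_real x)) \<le> \<epsilon>0"
    and gamma_def: "\<gamma> = Sup ((\<lambda>x. \<bar>f x\<bar>) ` {-1..1})"
    and unit: "(\<Sum>j=1..N. (\<psi> j)\<^sup>2) = 1"
    and Nf_def: "Nf = sqrt (\<Sum>j=1..N. \<bar>f (\<psi> j)\<bar>\<^sup>2)"
    and Nf_pos: "Nf\<^sup>2 > 0"
    and N1_def: "N1 = sqrt (\<Sum>j=1..N. (cmod (poly P (complex_of_real (\<psi> j))))\<^sup>2)"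
    and "0 < \<epsilon>" and "\<epsilon> \<le> 1"
    and small: "\<epsilon>0 \<le> \<epsilon> * Nf\<^sup>2 / (8 * \<gamma> * real N)"
  shows "sqrt (\<Sum>j=1..N. (cmod (complex_of_real (f (\<psi> j)) / complex_of_real Nf
                                  - poly P (complex_of_real (\<psi> j)) / complex_of_real N1))\<^sup>2) \<le> \<epsilon>"
proof -
  define a b where "a j = complex_of_real (f (\<psi> j))" and "b j = poly P (complex_of_real (\<psi> j))" for j
  have \<psi>_range: "\<psi> j \<in> {-1..1}" if "j \<in> {1..N}" for j
    using abs_le_one_if_sum_squares_le_one[of "{1..N}" j \<psi>] that unit by (simp add: abs_le_iff)
  have "bdd_above ((\<lambda>x. norm (complex_of_real (f x))) ` {-1..1})"
    using approx by (intro bdd_above_norm_if_close_to_continuous[where g = "\<lambda>x. poly P (of_real x)"])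
      (auto intro!: continuous_intros)
  then have f_le_\<gamma>: "\<bar>f x\<bar> \<le> \<gamma>" if "x \<in> {-1..1}" for x
    unfolding gamma_def using that by (auto intro: cSup_upper)
  have Nf_eq: "Nf = L2_set (\<lambda>j. norm (a j)) {1..N}" and N1_eq: "N1 = L2_set (\<lambda>j. norm (b j)) {1..N}"
    by (simp_all add: Nf_def N1_def L2_set_def a_def b_def)
  have "0 < Nf" using Nf_pos Nf_eq by (simp add: less_le)
  have "0 < N" using unit by (cases N) auto
  have "Nf \<le> sqrt (card {1..N}) * \<gamma>"
    unfolding Nf_eq by (rule L2_set_le_sqrt_card_mult) (auto simp: a_def intro!: f_le_\<gamma> \<psi>_range)
  then have "Nf \<le> sqrt N * \<gamma>" by simp
  have "L2_set (\<lambda>j. norm (a j - b j)) {1..N} \<le> sqrt (card {1..N}) * \<epsilon>0"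
    by (rule L2_set_le_sqrt_card_mult) (use approx \<psi>_range in \<open>auto simp: a_def b_def\<close>)
  then have "2 * L2_set (\<lambda>j. norm (a j - b j)) {1..N} / Nf \<le> 2 * (sqrt N * \<epsilon>0) / Nf"
    using \<open>0 < Nf\<close> by (simp add: divide_right_mono)
  with L2_set_normalized_diff_le[of a "{1..N}" b] \<open>0 < Nf\<close>
  have "L2_set (\<lambda>j. norm (a j /\<^sub>R Nf - b j /\<^sub>R N1)) {1..N} \<le> 2 * (sqrt N * \<epsilon>0) / Nf"
    by (simp add: Nf_eq N1_eq)
  also have "\<dots> \<le> \<epsilon>"
    using \<open>0 < N\<close> \<open>0 < Nf\<close> \<open>Nf \<le> sqrt N * \<gamma>\<close> \<open>\<epsilon>0 > 0\<close> \<open>0 < \<epsilon>\<close> small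
    by (intro two_sqrt_mult_div_le) auto
  finally show ?thesis
    by (simp add: L2_set_def a_def b_def scaleR_conv_of_real divide_inverse_commute)
qed

end
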